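(* On the good run event (defined in the context, with absolute constant $c_0>1$), for any $c_B>0$ and for $C>1$ a sufficiently large absolute constant, if assumptions (A1)–(A3) hold, then the max-margin solution $W_{\mathrm{MM}}$ satisfies, for $\mu\sim\mathrm{Unif}(\tilde R\cdot\mathbb S^{d-1})$ independent of the pre-training data, \[\frac{(c_B\wedge1)\tilde R^2}{16c_0^2R^2\log^2(2B^2/\delta)}\le\mathbb E_\mu[\mu^\top W_{\mathrm{MM}}\mu]\le\frac{6\tilde R^2}{R^2}.\]
   Context: Pre-training data: $\Lambda\succ0$ symmetric positive-definite $d\times d$, $B,N\ge1$, $R>0$, $\delta\in(0,1)$. For $\tau\in[B]$, $i\in[N+1]$: $\mu_\tau\sim\mathrm{Unif}(R\cdot\mathbb S^{d-1})$, $z_{\tau,i}\sim\mathcal N(0,\Lambda)$, $y_{\tau,i}\sim\mathrm{Unif}(\{\pm1\})$, all independent, $x_{\tau,i}=y_{\tau,i}\mu_\tau+z_{\tau,i}$; $\hat\mu_\tau=\frac1N\sum_{i=1}^Ny_{\tau,i}x_{\tau,i}$, $x_\tau=x_{\tau,N+1}$, $y_\tau=y_{\tau,N+1}$. Max-margin solution: $W_{\mathrm{MM}}=\arg\min\{\|U\|_F^2:\hat\mu_\tau^\top Uy_\tau x_\tau\ge1\ \forall\tau\in[B]\}$. Good run event (with constant $c_0$): for all $\tau\in[B]$, $q\ne\tau$: $|\|\hat\mu_\tau\|^2-R^2|\le \frac{c_0R\sqrt{\mathrm{tr}\Lambda}\log(2B/\delta)}{\sqrt{Nd}}+4\frac{\mathrm{tr}\Lambda\vee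 c_0\|\Lambda\|_2\log(2B/\delta)}{N}$; $|\|x_\tau\|^2-R^2|\le\frac{2c_0R\sqrt{\mathrm{tr}\Lambda}\log(2B/\delta)}{\sqrt d}+4(\mathrm{tr}\Lambda\vee c_0\|\Lambda\|_2\log(2B/\delta))$; $|\langle\hat\mu_q,\hat\mu_\tau\rangle|\le c_0(\frac{R^2}{\sqrt d}+\frac{R\sqrt{\mathrm{tr}\Lambda}}{\sqrt{Nd}}+\frac{\sqrt{\mathrm{tr}(\Lambda^2)}}N)\log(2B^2/\delta)$; $|\langle x_\tau,x_q\rangle|\le c_0(\frac{R^2}{\sqrt d}+\frac{R\sqrt{\mathrm{tr}\Lambda}}{\sqrt d}+\sqrt{\mathrm{tr}(\Lambda^2)})\log(2B^2/\delta)$; $|\langle\hat\mu_\tau,y_\tau x_\tau\rangle-R^2|\le c_0([1+N^{-1/2}]\frac{R\sqrt{\mathrm{tr}\Lambda}}{\sqrt d}+\frac{\sqrt{\mathrm{tr}(\Lambda^2)}}{\sqrt N})\log(2B/\delta)$. Assumptions: (A1) $R^2\ge C^2\sqrt{d\,\mathrm{tr}(\Lambda^2)}\vee C^2(\frac{\mathrm{tr}\Lambda}{d}\vee\sqrt{\frac{\mathrm{tr}(\Lambda^2)}{N}}\vee\|\Lambda\|_2)\log(2B/\delta)$; (A2) $B\ge c_Bd$; (A3) $d\ge C\log^4(2B^2/\delta)$. $\tilde R>0$ is arbitrary. $\vee=\max$, $\wedge=\min$. *)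

theory Defs
  imports "HOL-Analysis.Analysis"
begin

text \<open>Vectors in R^d are represented as functions nat => real (only coordinates i < d matter),
  d x d matrices as nat => nat => real (only entries i,j < d matter). This allows the
  dimension d to be quantified inside the statement (constants must be uniform in d).\<close>

definition dotd :: "nat \<Rightarrow> (nat \<Rightarrow> real) \<Rightarrow> (nat \<Rightarrow> real) \<Rightarrow> real" where
  "dotd d u v = (\<Sum>i<d. u i * v i)"

definition sqnd :: "nat \<Rightarrow> (nat \<Rightarrow> real) \<Rightarrow> real" where
  "sqnd d v = dotd d v v"

definition mvd :: "nat \<Rightarrow> (nat \<Rightarrow> nat \<Rightarrow> real) \<Rightarrow> (nat \<Rightarrow> real) \<Rightarrow> (nat \<Rightarrow> real)" where
  "mvd d A v = (\<lambda>i. \<Sum>j<d. A i j * v j)"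

definition mmd :: "nat \<Rightarrow> (nat \<Rightarrow> nat \<Rightarrow> real) \<Rightarrow> (nat \<Rightarrow> nat \<Rightarrow> real) \<Rightarrow> (nat \<Rightarrow> nat \<Rightarrow> real)" where
  "mmd d A B = (\<lambda>i k. \<Sum>j<d. A i j * B j k)"

definition trd :: "nat \<Rightarrow> (nat \<Rightarrow> nat \<Rightarrow> real) \<Rightarrow> real" where
  "trd d A = (\<Sum>i<d. A i i)"

definition opnorm2 :: "nat \<Rightarrow> (nat \<Rightarrow> nat \<Rightarrow> real) \<Rightarrow> real" where
  "opnorm2 d A = Sup {sqrt (sqnd d (mvd d A v)) | v. sqnd d v = 1}"

definition sym_pd :: "nat \<Rightarrow> (nat \<Rightarrow> nat \<Rightarrow> real) \<Rightarrow> bool" where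
  "sym_pd d L \<longleftrightarrow> (\<forall>i<d. \<forall>j<d. L i j = L j i) \<and>
     (\<forall>v. (\<exists>i<d. v i \<noteq> 0) \<longrightarrow> dotd d v (mvd d L v) > 0)"

definition fro2 :: "nat \<Rightarrow> (nat \<Rightarrow> nat \<Rightarrow> real) \<Rightarrow> real" where
  "fro2 d U = (\<Sum>i<d. \<Sum>j<d. (U i j)\<^sup>2)"

definition dmat :: "nat \<Rightarrow> (nat \<Rightarrow> nat \<Rightarrow> real) set" where
  "dmat d = {U. \<forall>i j. (d \<le> i \<or> d \<le> j) \<longrightarrow> U i j = 0}"

definition mm_feasible :: "nat \<Rightarrow> nat \<Rightarrow> (nat \<Rightarrow> nat \<Rightarrow> real) \<Rightarrow> (nat \<Rightarrow> nat \<Rightarrow> real)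
    \<Rightarrow> (nat \<Rightarrow> real) \<Rightarrow> (nat \<Rightarrow> nat \<Rightarrow> real) \<Rightarrow> bool" where
  "mm_feasible d B muhat xq yq U \<longleftrightarrow>
     (\<forall>\<tau><B. dotd d (muhat \<tau>) (mvd d U (\<lambda>k. yq \<tau> * xq \<tau> k)) \<ge> 1)"

definition is_max_margin :: "nat \<Rightarrow> nat \<Rightarrow> (nat \<Rightarrow> nat \<Rightarrow> real) \<Rightarrow> (nat \<Rightarrow> nat \<Rightarrow> real)
    \<Rightarrow> (nat \<Rightarrow> real) \<Rightarrow> (nat \<Rightarrow> nat \<Rightarrow> real) \<Rightarrow> bool" where
  "is_max_margin d B muhat xq yq W \<longleftrightarrow> W \<in> dmat d \<and> mm_feasible d B muhat xq yq W \<and>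
     (\<forall>U\<in>dmat d. mm_feasible d B muhat xq yq U \<longrightarrow> fro2 d W \<le> fro2 d U)"

text \<open>Uniform distribution on the sphere of radius Rt in R^d: push-forward of the uniform
  distribution on the open unit ball under x \<mapsto> Rt x / |x| (cone measure = normalized surface measure).\<close>
definition unit_ball_d :: "nat \<Rightarrow> (nat \<Rightarrow> real) set" where
  "unit_ball_d d = {x \<in> space (PiM {..<d} (\<lambda>_. lborel)). sqnd d x < 1}"

definition unif_sphere :: "nat \<Rightarrow> real \<Rightarrow> (nat \<Rightarrow> real) measure" where
  "unif_sphere d Rt = distr (uniform_measure (PiM {..<d} (\<lambda>_. lborel)) (unit_ball_d d))
      (PiM {..<d} (\<lambda>_. lborel)) (\<lambda>x. restrict (\<lambda>i. Rt * x i / sqrt (sqnd d x)) {..<d})"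

definition good_run :: "real \<Rightarrow> nat \<Rightarrow> nat \<Rightarrow> nat \<Rightarrow> real \<Rightarrow> real \<Rightarrow> (nat \<Rightarrow> nat \<Rightarrow> real)
    \<Rightarrow> (nat \<Rightarrow> nat \<Rightarrow> real) \<Rightarrow> (nat \<Rightarrow> nat \<Rightarrow> real) \<Rightarrow> (nat \<Rightarrow> real) \<Rightarrow> bool" where
  "good_run c0 d B N R \<delta> L muhat xq yq \<longleftrightarrow>
    (let trL = trd d L; trL2 = trd d (mmd d L L); nL = opnorm2 d L;
         l1 = ln (2 * real B / \<delta>); l2 = ln (2 * (real B)\<^sup>2 / \<delta>) in
     (\<forall>\<tau><B.
        \<bar>sqnd d (muhat \<tau>) - R\<^sup>2\<bar> \<le> c0 * R * sqrt trL * l1 / sqrt (real N * real d)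
            + 4 * max trL (c0 * nL * l1) / real N
      \<and> \<bar>sqnd d (xq \<tau>) - R\<^sup>2\<bar> \<le> 2 * c0 * R * sqrt trL * l1 / sqrt (real d)
            + 4 * max trL (c0 * nL * l1)
      \<and> \<bar>dotd d (muhat \<tau>) (\<lambda>k. yq \<tau> * xq \<tau> k) - R\<^sup>2\<bar> \<le>
            c0 * ((1 + 1 / sqrt (real N)) * R * sqrt trL / sqrt (real d) + sqrt trL2 / sqrt (real N)) * l1
      \<and> (\<forall>q<B. q \<noteq> \<tau> \<longrightarrow>
          \<bar>dotd d (muhat q) (muhat \<tau>)\<bar> \<le>
            c0 * (R\<^sup>2 / sqrt (real d) + R * sqrt trL / sqrt (real N * real d) + sqrt trL2 / real N) * l2
        \<and> \<bar>dotd d (xq \<tau>) (xq q)\<bar> \<le>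
            c0 * (R\<^sup>2 / sqrt (real d) + R * sqrt trL / sqrt (real d) + sqrt trL2) * l2)))"

end

(*
  Sign flips and transpositions of coordinates preserve the uniform distribution
  on the sphere, so its second moment matrix is (Rt^2/d) I and E[m^T W m] = (Rt^2/d) tr W.
  On the good run event every margin <muhat_tau, y_tau x_tau> is at least R^2/2, so the
  comparison matrix U = (2/R^2) I is feasible.  Minimality of W gives |W|_F <= |U|_F, whence
  tr W <= sqrt d |W|_F <= 2d/R^2; the first-order optimality condition <W, U> >= |W|_F^2 gives
  tr W >= (R^2/2) |W|_F^2.  Summing the B constraints and applying Cauchy-Schwarz yields
  B^2 <= |W|_F^2 |sum_tau muhat_tau (y_tau x_tau)^T|_F^2, and the last norm is at most
  B (11/10 R^2)^2 + B^2 (11/10 R^2 eps)^2 with eps = c0 log(2B^2/delta)/sqrt d, because the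
  muhat_tau, and likewise the x_tau, are nearly orthogonal; assumptions (A2) and (A3) turn this into the
  stated lower bound.
*)
theory Submission
  imports Defs "HOL-Probability.Probability"
begin

section \<open>Frobenius inner product of d x d matrices\<close>

definition frob_inner :: "nat \<Rightarrow> (nat \<Rightarrow> nat \<Rightarrow> real) \<Rightarrow> (nat \<Rightarrow> nat \<Rightarrow> real) \<Rightarrow> real" where
  "frob_inner d U V = (\<Sum>i<d. \<Sum>j<d. U i j * V i j)"

lemma fro2_eq_frob_inner: "fro2 d U = frob_inner d U U"
  unfolding fro2_def frob_inner_def by (simp add: power2_eq_square)

lemma frob_inner_commute: "frob_inner d U V = frob_inner d V U"
  unfolding frob_inner_def by (simp add: mult.commute)

lemma fro2_nonneg: "fro2 d U \<ge> 0"
  unfolding fro2_def by (intro sum_nonneg) auto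

lemma entry_sq_le_fro2:
  assumes "i < d" "j < d"
  shows "(U i j)\<^sup>2 \<le> fro2 d U"
proof -
  have "(U i j)\<^sup>2 \<le> (\<Sum>j<d. (U i j)\<^sup>2)"
    using assms by (intro member_le_sum) auto
  also have "\<dots> \<le> fro2 d U"
    unfolding fro2_def using assms by (intro member_le_sum[where f = "\<lambda>i. \<Sum>j<d. (U i j)\<^sup>2"]) (auto intro: sum_nonneg)
  finally show ?thesis .
qed

lemma fro2_parallelogram:
  "fro2 d (\<lambda>i j. U i j - V i j) = 2 * fro2 d U + 2 * fro2 d V - 4 * fro2 d (\<lambda>i j. (U i j + V i j) / 2)"
proof -
  have "fro2 d (\<lambda>i j. U i j - V i j) + 4 * fro2 d (\<lambda>i j. (U i j + V i j) / 2) = 2 * fro2 d U + 2 * fro2 d V"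
    unfolding fro2_def sum.distrib[symmetric] sum_distrib_left
    by (intro sum.cong refl) (simp add: power2_eq_square field_simps)
  then show ?thesis by simp
qed

lemma fro2_segment:
  "fro2 d (\<lambda>i j. W i j + t * (U i j - W i j))
     = fro2 d W - 2 * t * (fro2 d W - frob_inner d W U) + t\<^sup>2 * fro2 d (\<lambda>i j. U i j - W i j)"
  unfolding fro2_def frob_inner_def
  by (simp add: sum_subtractf sum.distrib sum_distrib_left power2_eq_square algebra_simps)

lemma frob_inner_Cauchy_Schwarz: "(frob_inner d U V)\<^sup>2 \<le> fro2 d U * fro2 d V"
proof -
  have pairs: "(\<Sum>i<d. \<Sum>j<d. f i j) = (\<Sum>p\<in>{..<d}\<times>{..<d}. f (fst p) (snd p))" for f :: "nat \<Rightarrow> nat \<Rightarrow> real"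
    by (simp add: sum.cartesian_product case_prod_beta)
  show ?thesis
    unfolding frob_inner_def fro2_def pairs by (rule Cauchy_Schwarz_ineq_sum)
qed

lemma trd_sq_le_fro2: "(trd d W)\<^sup>2 \<le> real d * fro2 d W"
proof -
  have "(trd d W)\<^sup>2 \<le> real d * (\<Sum>i<d. (W i i)\<^sup>2)"
    unfolding trd_def using sum_squared_le_sum_of_squares[of "\<lambda>i. W i i" "{..<d}"] by (simp add: mult.commute)
  also have "(\<Sum>i<d. (W i i)\<^sup>2) \<le> fro2 d W"
    unfolding fro2_def by (intro sum_mono member_le_sum) auto
  finally show ?thesis by (simp add: mult_left_mono)
qed

lemma sqnd_nonneg: "sqnd d x \<ge> 0"
  unfolding sqnd_def dotd_def by (intro sum_nonneg) auto

lemma dotd_commute: "dotd d u v = dotd d v u"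
  unfolding dotd_def by (simp add: mult.commute)

lemma trd_outer: "trd d (\<lambda>i j. a i * v j) = dotd d a v"
  unfolding trd_def dotd_def ..

lemma dotd_mvd_eq_frob_inner: "dotd d a (mvd d U v) = frob_inner d U (\<lambda>i j. a i * v j)"
  unfolding dotd_def mvd_def frob_inner_def by (simp add: sum_distrib_left mult_ac)

lemma frob_inner_outer:
  "frob_inner d (\<lambda>i j. a i * u j) (\<lambda>i j. b i * v j) = dotd d a b * dotd d u v"
  unfolding frob_inner_def dotd_def sum_product by (intro sum.cong refl) (simp add: mult_ac)

lemma frob_inner_sum_right: "frob_inner d W (\<lambda>i j. \<Sum>t<B. A t i j) = (\<Sum>t<B. frob_inner d W (A t))"
  unfolding frob_inner_def sum_distrib_left by (subst sum.swap, subst (2) sum.swap) (rule refl)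

lemma fro2_sum: "fro2 d (\<lambda>i j. \<Sum>t<B. A t i j) = (\<Sum>t<B. \<Sum>q<B. frob_inner d (A t) (A q))"
  unfolding fro2_eq_frob_inner frob_inner_sum_right
  by (subst frob_inner_commute, simp only: frob_inner_sum_right)

definition scaled_id :: "nat \<Rightarrow> real \<Rightarrow> (nat \<Rightarrow> nat \<Rightarrow> real)" where
  "scaled_id d c = (\<lambda>i j. if i < d \<and> j = i then c else 0)"

lemma scaled_id_dmat: "scaled_id d c \<in> dmat d"
  unfolding scaled_id_def dmat_def by auto

lemma fro2_scaled_id: "fro2 d (scaled_id d c) = real d * c\<^sup>2"
  unfolding fro2_def scaled_id_def by (simp add: if_distrib[of "\<lambda>x. x\<^sup>2"] cong: if_cong)

lemma frob_inner_scaled_id: "frob_inner d W (scaled_id d c) = c * trd d W"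
  unfolding frob_inner_def scaled_id_def trd_def
  by (simp add: if_distrib[of "(*) _"] sum_distrib_left mult.commute cong: if_cong)

section \<open>The max-margin problem\<close>

lemma dmat_segment:
  "U \<in> dmat d \<Longrightarrow> V \<in> dmat d \<Longrightarrow> (\<lambda>i j. U i j + t * (V i j - U i j)) \<in> dmat d"
  unfolding dmat_def by auto

lemma mm_feasible_iff_frob_inner:
  "mm_feasible d B mh xq yq U \<longleftrightarrow> (\<forall>\<tau><B. frob_inner d U (\<lambda>i j. mh \<tau> i * (yq \<tau> * xq \<tau> j)) \<ge> 1)"
  unfolding mm_feasible_def dotd_mvd_eq_frob_inner ..

lemma mm_feasible_segment:
  assumes "mm_feasible d B mh xq yq U" "mm_feasible d B mh xq yq V" "0 \<le> t" "t \<le> 1"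
  shows "mm_feasible d B mh xq yq (\<lambda>i j. U i j + t * (V i j - U i j))"
  unfolding mm_feasible_iff_frob_inner
proof (intro allI impI)
  fix \<tau> assume "\<tau> < B"
  define A where "A = (\<lambda>i j. mh \<tau> i * (yq \<tau> * xq \<tau> j))"
  have "frob_inner d U A \<ge> 1" "frob_inner d V A \<ge> 1"
    using assms \<open>\<tau> < B\<close> unfolding mm_feasible_iff_frob_inner A_def by auto
  moreover have "frob_inner d (\<lambda>i j. U i j + t * (V i j - U i j)) A = (1 - t) * frob_inner d U A + t * frob_inner d V A"
    unfolding frob_inner_def by (simp add: algebra_simps sum.distrib sum_distrib_left sum_subtractf)
  ultimately have "frob_inner d (\<lambda>i j. U i j + t * (V i j - U i j)) A \<ge> (1 - t) * 1 + t * 1"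
    using assms(3,4) by (metis add_mono diff_ge_0_iff_ge mult_left_mono)
  then show "frob_inner d (\<lambda>i j. U i j + t * (V i j - U i j)) A \<ge> 1"
    by simp
qed

lemma mm_feasible_midpoint:
  assumes "U \<in> dmat d" "V \<in> dmat d" "mm_feasible d B mh xq yq U" "mm_feasible d B mh xq yq V"
  shows "(\<lambda>i j. (U i j + V i j) / 2) \<in> dmat d \<and> mm_feasible d B mh xq yq (\<lambda>i j. (U i j + V i j) / 2)"
proof -
  have "(\<lambda>i j. (U i j + V i j) / 2) = (\<lambda>i j. U i j + 1/2 * (V i j - U i j))"
    by (auto simp: fun_eq_iff field_simps)
  then show ?thesis
    using assms mm_feasible_segment[of d B mh xq yq U V "1/2"] unfolding dmat_def by simp
qed

lemma mm_feasible_limit: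
  assumes "\<And>i j. i < d \<Longrightarrow> j < d \<Longrightarrow> (\<lambda>n. Us n i j) \<longlonglongrightarrow> W i j"
    and "\<And>n. mm_feasible d B mh xq yq (Us n)"
  shows "mm_feasible d B mh xq yq W"
  unfolding mm_feasible_iff_frob_inner
proof (intro allI impI)
  fix \<tau> assume "\<tau> < B"
  define A where "A = (\<lambda>i j. mh \<tau> i * (yq \<tau> * xq \<tau> j))"
  have "(\<lambda>n. frob_inner d (Us n) A) \<longlonglongrightarrow> frob_inner d W A"
    unfolding frob_inner_def using assms(1) by (intro tendsto_sum tendsto_mult_right) auto
  moreover have "\<forall>n. 1 \<le> frob_inner d (Us n) A"
    using assms(2) \<open>\<tau> < B\<close> unfolding mm_feasible_iff_frob_inner A_def by auto
  ultimately show "1 \<le> frob_inner d W A"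
    unfolding A_def by (intro LIMSEQ_le_const) auto
qed

lemma Cauchy_entries_of_fro2_dist:
  assumes dist: "\<And>n k. fro2 d (\<lambda>i j. Us n i j - Us k i j) \<le> f n + f k"
    and f: "f \<longlonglongrightarrow> 0" and "i < d" "j < d"
  shows "Cauchy (\<lambda>n. Us n i j)"
proof (rule CauchyI)
  fix e :: real assume "e > 0"
  then have "\<forall>\<^sub>F n in sequentially. dist (f n) 0 < e\<^sup>2 / 2"
    using f by (intro tendstoD) auto
  then obtain M where M: "\<And>n. n \<ge> M \<Longrightarrow> \<bar>f n\<bar> < e\<^sup>2 / 2"
    unfolding eventually_sequentially dist_real_def by auto
  show "\<exists>M. \<forall>m\<ge>M. \<forall>n\<ge>M. norm (Us m i j - Us n i j) < e"
  proof (intro exI allI impI)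
    fix n k assume "M \<le> n" "M \<le> k"
    have "(Us n i j - Us k i j)\<^sup>2 \<le> fro2 d (\<lambda>i j. Us n i j - Us k i j)"
      using entry_sq_le_fro2[OF \<open>i < d\<close> \<open>j < d\<close>, of "\<lambda>i j. Us n i j - Us k i j"] by simp
    also have "\<dots> < e\<^sup>2"
      using dist[of n k] M[OF \<open>M \<le> n\<close>] M[OF \<open>M \<le> k\<close>] by linarith
    finally show "norm (Us n i j - Us k i j) < e"
      using \<open>e > 0\<close> by (simp add: power2_less_imp_less)
  qed
qed

lemma minimizing_sequence_entries_Cauchy:
  assumes mid: "\<And>n k. m \<le> fro2 d (\<lambda>i j. (Us n i j + Us k i j) / 2)"
    and near: "\<And>n. fro2 d (Us n) < m + 1 / real (Suc n)" and "i < d" "j < d"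
  shows "Cauchy (\<lambda>n. Us n i j)"
proof (rule Cauchy_entries_of_fro2_dist[where f = "\<lambda>n. 2 / real (Suc n)"])
  show "fro2 d (\<lambda>i j. Us n i j - Us k i j) \<le> 2 / real (Suc n) + 2 / real (Suc k)" for n k
    using fro2_parallelogram[of d "Us n" "Us k"] mid[of n k] near[of n] near[of k] by linarith
  show "(\<lambda>n. 2 / real (Suc n)) \<longlonglongrightarrow> 0"
    using LIMSEQ_inverse_real_of_nat tendsto_mult_right_zero[of _ sequentially 2]
    by (simp add: divide_inverse)
qed (use assms in auto)

lemma max_margin_exists:
  assumes "U0 \<in> dmat d" "mm_feasible d B mh xq yq U0"
  shows "\<exists>W. is_max_margin d B mh xq yq W"
proof -
  define F where "F = {U \<in> dmat d. mm_feasible d B mh xq yq U}"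
  define m where "m = Inf (fro2 d ` F)"
  have bdd: "bdd_below (fro2 d ` F)"
    using fro2_nonneg by (intro bdd_belowI[of _ 0]) auto
  have m_le: "m \<le> fro2 d U" if "U \<in> F" for U
    unfolding m_def using bdd that by (intro cInf_lower) auto
  have "\<exists>U\<in>F. fro2 d U < m + 1 / real (Suc n)" for n
    using cInf_less_iff[OF _ bdd, of "m + 1 / real (Suc n)"] assms unfolding m_def F_def by auto
  then obtain Us where Us: "\<And>n. Us n \<in> F" "\<And>n. fro2 d (Us n) < m + 1 / real (Suc n)"
    by metis
  have "m \<le> fro2 d (\<lambda>i j. (Us n i j + Us k i j) / 2)" for n k
    using Us(1)[of n] Us(1)[of k] mm_feasible_midpoint by (intro m_le) (auto simp: F_def)
  then have "convergent (\<lambda>n. Us n i j)" if "i < d" "j < d" for i j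
    using Us(2) that by (intro Cauchy_convergent minimizing_sequence_entries_Cauchy)
  then obtain W where lim: "\<And>i j. i < d \<Longrightarrow> j < d \<Longrightarrow> (\<lambda>n. Us n i j) \<longlonglongrightarrow> W i j"
    and W_dmat: "W \<in> dmat d"
    by (intro that[of "\<lambda>i j. if i < d \<and> j < d then lim (\<lambda>n. Us n i j) else 0"])
      (auto simp: dmat_def convergent_LIMSEQ_iff)
  have "(\<lambda>n. fro2 d (Us n)) \<longlonglongrightarrow> fro2 d W"
    unfolding fro2_def using lim by (intro tendsto_sum tendsto_power) auto
  moreover have "(\<lambda>n. fro2 d (Us n)) \<longlonglongrightarrow> m"
  proof (rule tendsto_sandwich[of "\<lambda>n. m" _ _ "\<lambda>n. m + 1 / real (Suc n)"])
    show "\<forall>\<^sub>F n in sequentially. m \<le> fro2 d (Us n)"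
      using m_le Us(1) by auto
    show "\<forall>\<^sub>F n in sequentially. fro2 d (Us n) \<le> m + 1 / real (Suc n)"
      using Us(2) by (intro always_eventually allI less_imp_le)
    show "(\<lambda>n. m + 1 / real (Suc n)) \<longlonglongrightarrow> m"
      using tendsto_add[OF tendsto_const LIMSEQ_inverse_real_of_nat, of m] by (simp add: divide_inverse)
  qed simp
  ultimately have "fro2 d W = m"
    by (rule LIMSEQ_unique)
  moreover have "mm_feasible d B mh xq yq W"
    using lim Us(1) unfolding F_def by (intro mm_feasible_limit[of d Us W]) auto
  ultimately show ?thesis
    unfolding is_max_margin_def using W_dmat m_le F_def by auto
qed

lemma max_margin_unique:
  assumes "is_max_margin d B mh xq yq W1" "is_max_margin d B mh xq yq W2"
  shows "W1 = W2"
proof -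
  have W: "W1 \<in> dmat d" "W2 \<in> dmat d" "mm_feasible d B mh xq yq W1" "mm_feasible d B mh xq yq W2"
    using assms unfolding is_max_margin_def by auto
  then have "fro2 d W1 = fro2 d W2"
    using assms unfolding is_max_margin_def by (meson order.antisym)
  moreover have "fro2 d W1 \<le> fro2 d (\<lambda>i j. (W1 i j + W2 i j) / 2)"
    using assms(1) W mm_feasible_midpoint unfolding is_max_margin_def by simp
  ultimately have "fro2 d (\<lambda>i j. W1 i j - W2 i j) \<le> 0"
    using fro2_parallelogram[of d W1 W2] by linarith
  then have "(W1 i j - W2 i j)\<^sup>2 \<le> 0" if "i < d" "j < d" for i j
    using entry_sq_le_fro2[OF that, of "\<lambda>i j. W1 i j - W2 i j"] by linarith
  then have "W1 i j = W2 i j" if "i < d" "j < d" for i j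
    using that by (metis eq_iff_diff_eq_0 power2_less_eq_zero_iff)
  moreover have "W1 i j = W2 i j" if "\<not> (i < d \<and> j < d)" for i j
    using W that unfolding dmat_def by auto
  ultimately show ?thesis
    by blast
qed

text \<open>First-order optimality: moving from W towards a feasible U cannot decrease the norm.\<close>
lemma max_margin_variational:
  assumes W: "is_max_margin d B mh xq yq W" and U: "U \<in> dmat d" "mm_feasible d B mh xq yq U"
  shows "fro2 d W \<le> frob_inner d W U"
proof (rule ccontr)
  define e where "e = fro2 d W - frob_inner d W U"
  define K where "K = fro2 d (\<lambda>i j. U i j - W i j)"
  define t where "t = min 1 (e / (K + 1))"
  assume "\<not> ?thesis"
  then have "e > 0"
    unfolding e_def by simp
  have "K \<ge> 0"
    unfolding K_def by (rule fro2_nonneg)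
  have t: "0 < t" "t \<le> 1"
    unfolding t_def using \<open>e > 0\<close> \<open>K \<ge> 0\<close> by auto
  have "t * K \<le> e / (K + 1) * K"
    unfolding t_def using \<open>K \<ge> 0\<close> by (intro mult_right_mono) auto
  also have "\<dots> < e"
    using \<open>K \<ge> 0\<close> \<open>e > 0\<close> by (simp add: field_simps)
  finally have "t * K < e" .
  have "fro2 d W \<le> fro2 d (\<lambda>i j. W i j + t * (U i j - W i j))"
    using W U t dmat_segment mm_feasible_segment unfolding is_max_margin_def by auto
  also have "\<dots> = fro2 d W - t * (2 * e - t * K)"
    unfolding fro2_segment e_def K_def by (simp add: power2_eq_square algebra_simps)
  finally have "t * (2 * e - t * K) \<le> 0"
    by simp
  moreover have "t * (2 * e - t * K) > 0"
    using t \<open>t * K < e\<close> \<open>e > 0\<close> by simp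
  ultimately show False
    by simp
qed

lemma mm_feasible_fro2_lower:
  assumes "mm_feasible d B mh xq yq W"
  shows "(real B)\<^sup>2 \<le> fro2 d W * fro2 d (\<lambda>i j. \<Sum>t<B. mh t i * (yq t * xq t j))"
proof -
  have "real B = (\<Sum>t<B. 1)"
    by simp
  also have "\<dots> \<le> (\<Sum>t<B. frob_inner d W (\<lambda>i j. mh t i * (yq t * xq t j)))"
    using assms unfolding mm_feasible_iff_frob_inner by (intro sum_mono) auto
  also have "\<dots> = frob_inner d W (\<lambda>i j. \<Sum>t<B. mh t i * (yq t * xq t j))"
    by (rule frob_inner_sum_right[symmetric])
  finally have "(real B)\<^sup>2 \<le> (frob_inner d W (\<lambda>i j. \<Sum>t<B. mh t i * (yq t * xq t j)))\<^sup>2"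
    by (intro power_mono) auto
  also have "\<dots> \<le> fro2 d W * fro2 d (\<lambda>i j. \<Sum>t<B. mh t i * (yq t * xq t j))"
    by (rule frob_inner_Cauchy_Schwarz)
  finally show ?thesis .
qed

lemma mm_feasible_scaled_id:
  assumes "R > 0" and margin: "\<forall>\<tau><B. R\<^sup>2 / 2 \<le> dotd d (mh \<tau>) (\<lambda>k. yq \<tau> * xq \<tau> k)"
  shows "mm_feasible d B mh xq yq (scaled_id d (2 / R\<^sup>2))"
  unfolding mm_feasible_def dotd_mvd_eq_frob_inner
proof (intro allI impI)
  fix \<tau> assume "\<tau> < B"
  have "1 = 2 / R\<^sup>2 * (R\<^sup>2 / 2)"
    using \<open>R > 0\<close> by simp
  also have "\<dots> \<le> 2 / R\<^sup>2 * dotd d (mh \<tau>) (\<lambda>k. yq \<tau> * xq \<tau> k)"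
    using margin \<open>\<tau> < B\<close> by (intro mult_left_mono) auto
  finally show "1 \<le> frob_inner d (scaled_id d (2 / R\<^sup>2)) (\<lambda>i j. mh \<tau> i * (yq \<tau> * xq \<tau> j))"
    by (subst frob_inner_commute) (simp add: frob_inner_scaled_id trd_outer)
qed

lemma max_margin_trace_bounds:
  assumes "R > 0" and margin: "\<forall>\<tau><B. R\<^sup>2 / 2 \<le> dotd d (mh \<tau>) (\<lambda>k. yq \<tau> * xq \<tau> k)"
    and W: "is_max_margin d B mh xq yq W"
  shows "R\<^sup>2 / 2 * fro2 d W \<le> trd d W" "trd d W \<le> 2 * real d / R\<^sup>2"
proof -
  let ?U = "scaled_id d (2 / R\<^sup>2)"
  have U: "?U \<in> dmat d" "mm_feasible d B mh xq yq ?U"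
    using assms(1) margin by (simp_all add: scaled_id_dmat mm_feasible_scaled_id)
  have "fro2 d W \<le> 2 / R\<^sup>2 * trd d W"
    using max_margin_variational[OF W U] unfolding frob_inner_scaled_id .
  then have "R\<^sup>2 / 2 * fro2 d W \<le> R\<^sup>2 / 2 * (2 / R\<^sup>2 * trd d W)"
    by (rule mult_left_mono) simp
  then show "R\<^sup>2 / 2 * fro2 d W \<le> trd d W"
    using \<open>R > 0\<close> by simp
  have "fro2 d W \<le> fro2 d ?U"
    using W U unfolding is_max_margin_def by blast
  then have "(trd d W)\<^sup>2 \<le> real d * fro2 d ?U"
    using trd_sq_le_fro2[of d W] mult_left_mono[of "fro2 d W" "fro2 d ?U" "real d"] by linarith
  also have "\<dots> = (2 * real d / R\<^sup>2)\<^sup>2"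
    unfolding fro2_scaled_id by (simp add: power2_eq_square)
  finally show "trd d W \<le> 2 * real d / R\<^sup>2"
    by (rule power2_le_imp_le) simp
qed

lemma frob_inner_margin_matrices_le:
  assumes y: "yq t \<in> {-1, 1}" "yq q \<in> {-1, 1}"
    and diag: "sqnd d (mh t) \<le> D" "sqnd d (xq t) \<le> D"
    and offdiag: "q \<noteq> t \<Longrightarrow> \<bar>dotd d (mh q) (mh t)\<bar> \<le> E \<and> \<bar>dotd d (xq t) (xq q)\<bar> \<le> E"
  shows "frob_inner d (\<lambda>i j. mh t i * (yq t * xq t j)) (\<lambda>i j. mh q i * (yq q * xq q j))
      \<le> (if q = t then D\<^sup>2 else 0) + E\<^sup>2"
proof -
  have val: "frob_inner d (\<lambda>i j. mh t i * (yq t * xq t j)) (\<lambda>i j. mh q i * (yq q * xq q j))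
      = yq t * yq q * (dotd d (mh t) (mh q) * dotd d (xq t) (xq q))"
    by (simp add: frob_inner_outer) (simp add: dotd_def sum_distrib_left mult_ac)
  have y1: "yq t * yq t = 1" "\<bar>yq t * yq q\<bar> = 1"
    using y by (auto simp: abs_mult)
  show ?thesis
  proof (cases "q = t")
    case True
    have "sqnd d (mh t) * sqnd d (xq t) \<le> D * D"
      using diag sqnd_nonneg by (intro mult_mono) (auto intro: order_trans)
    then show ?thesis
      using True val y1 by (simp add: sqnd_def power2_eq_square add_increasing2)
  next
    case False
    have "frob_inner d (\<lambda>i j. mh t i * (yq t * xq t j)) (\<lambda>i j. mh q i * (yq q * xq q j))
        \<le> \<bar>yq t * yq q * (dotd d (mh t) (mh q) * dotd d (xq t) (xq q))\<bar>"
      unfolding val by (rule abs_ge_self)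
    also have "\<dots> = \<bar>dotd d (mh q) (mh t)\<bar> * \<bar>dotd d (xq t) (xq q)\<bar>"
      using y1 by (simp only: abs_mult dotd_commute[of d "mh t" "mh q"])
    also have "\<dots> \<le> E * E"
      using offdiag[OF False] by (intro mult_mono) (auto intro: order_trans[OF abs_ge_zero])
    finally show ?thesis
      using False by (simp add: power2_eq_square)
  qed
qed

lemma fro2_sum_margin_matrices_le:
  assumes y: "\<forall>\<tau><B. yq \<tau> \<in> {-1, 1}"
    and diag: "\<forall>\<tau><B. sqnd d (mh \<tau>) \<le> D \<and> sqnd d (xq \<tau>) \<le> D"
    and offdiag: "\<forall>\<tau><B. \<forall>q<B. q \<noteq> \<tau> \<longrightarrow> \<bar>dotd d (mh q) (mh \<tau>)\<bar> \<le> E \<and> \<bar>dotd d (xq \<tau>) (xq q)\<bar> \<le> E"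
  shows "fro2 d (\<lambda>i j. \<Sum>t<B. mh t i * (yq t * xq t j)) \<le> real B * D\<^sup>2 + (real B)\<^sup>2 * E\<^sup>2"
proof -
  have "fro2 d (\<lambda>i j. \<Sum>t<B. mh t i * (yq t * xq t j))
      = (\<Sum>t<B. \<Sum>q<B. frob_inner d (\<lambda>i j. mh t i * (yq t * xq t j)) (\<lambda>i j. mh q i * (yq q * xq q j)))"
    by (rule fro2_sum)
  also have "\<dots> \<le> (\<Sum>t<B. \<Sum>q<B. (if q = t then D\<^sup>2 else 0) + E\<^sup>2)"
    using assms by (intro sum_mono frob_inner_margin_matrices_le) auto
  also have "\<dots> = real B * D\<^sup>2 + (real B)\<^sup>2 * E\<^sup>2"
    by (simp add: sum.distrib power2_eq_square algebra_simps)
  finally show ?thesis .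
qed

lemma max_margin_trace_lower:
  assumes "R > 0" and margin: "\<forall>\<tau><B. R\<^sup>2 / 2 \<le> dotd d (mh \<tau>) (\<lambda>k. yq \<tau> * xq \<tau> k)"
    and y: "\<forall>\<tau><B. yq \<tau> \<in> {-1, 1}"
    and diag: "\<forall>\<tau><B. sqnd d (mh \<tau>) \<le> D \<and> sqnd d (xq \<tau>) \<le> D"
    and offdiag: "\<forall>\<tau><B. \<forall>q<B. q \<noteq> \<tau> \<longrightarrow> \<bar>dotd d (mh q) (mh \<tau>)\<bar> \<le> E \<and> \<bar>dotd d (xq \<tau>) (xq q)\<bar> \<le> E"
    and W: "is_max_margin d B mh xq yq W"
  shows "R\<^sup>2 / 2 * (real B)\<^sup>2 / (real B * D\<^sup>2 + (real B)\<^sup>2 * E\<^sup>2) \<le> trd d W"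
proof -
  define G where "G = real B * D\<^sup>2 + (real B)\<^sup>2 * E\<^sup>2"
  have "(real B)\<^sup>2 / G \<le> fro2 d W"
  proof (cases "G = 0")
    case False
    then have "G > 0"
      unfolding G_def by (simp add: add_pos_nonneg order_less_le)
    have "(real B)\<^sup>2 \<le> fro2 d W * fro2 d (\<lambda>i j. \<Sum>t<B. mh t i * (yq t * xq t j))"
      using W unfolding is_max_margin_def by (intro mm_feasible_fro2_lower) blast
    also have "\<dots> \<le> fro2 d W * G"
      unfolding G_def using fro2_sum_margin_matrices_le[OF y diag offdiag] fro2_nonneg
      by (intro mult_left_mono) auto
    finally show ?thesis
      using \<open>G > 0\<close> by (simp add: divide_le_eq)
  qed (simp add: fro2_nonneg)
  then have "R\<^sup>2 / 2 * ((real B)\<^sup>2 / G) \<le> R\<^sup>2 / 2 * fro2 d W"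
    by (rule mult_left_mono) simp
  also have "\<dots> \<le> trd d W"
    by (rule max_margin_trace_bounds(1)[OF \<open>R > 0\<close> margin W])
  finally show ?thesis
    unfolding G_def by simp
qed

section \<open>Second moments of the uniform distribution on the sphere\<close>

interpretation lborel_product: product_sigma_finite "\<lambda>_::nat. lborel :: real measure"
  by standard

abbreviation lborel_d :: "nat \<Rightarrow> (nat \<Rightarrow> real) measure" where
  "lborel_d d \<equiv> PiM {..<d} (\<lambda>_. lborel)"

abbreviation unif_ball :: "nat \<Rightarrow> (nat \<Rightarrow> real) measure" where
  "unif_ball d \<equiv> uniform_measure (lborel_d d) (unit_ball_d d)"

definition sphere_proj :: "nat \<Rightarrow> real \<Rightarrow> (nat \<Rightarrow> real) \<Rightarrow> (nat \<Rightarrow> real)" where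
  "sphere_proj d Rt x = restrict (\<lambda>i. Rt * x i / sqrt (sqnd d x)) {..<d}"

lemma unif_sphere_eq_distr: "unif_sphere d Rt = distr (unif_ball d) (lborel_d d) (sphere_proj d Rt)"
  unfolding unif_sphere_def sphere_proj_def ..

lemma measurable_uniform_measure_iff: "measurable (uniform_measure M A) N = measurable M N"
  by (rule measurable_cong_sets) auto

lemma measurable_unif_sphere_iff: "measurable (unif_sphere d Rt) N = measurable (lborel_d d) N"
  by (rule measurable_cong_sets) (simp_all add: unif_sphere_def)

lemma sqnd_measurable[measurable]: "(\<lambda>x. sqnd d x) \<in> borel_measurable (lborel_d d)"
  unfolding sqnd_def dotd_def by measurable

lemma unit_ball_d_sets: "unit_ball_d d \<in> sets (lborel_d d)"
  unfolding unit_ball_d_def by measurable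

lemma sphere_proj_measurable: "sphere_proj d Rt \<in> lborel_d d \<rightarrow>\<^sub>M lborel_d d"
  unfolding sphere_proj_def
  by (rule measurable_restrict) (unfold measurable_lborel1, measurable)

lemma coord_mult_measurable:
  "a < d \<Longrightarrow> b < d \<Longrightarrow> (\<lambda>m. m a * m b) \<in> borel_measurable (lborel_d d)"
  by (intro borel_measurable_times measurable_component_singleton[where M = "\<lambda>_. lborel", simplified]) auto

lemma sqnd_sphere_proj:
  assumes "sqnd d x \<noteq> 0"
  shows "sqnd d (sphere_proj d Rt x) = Rt\<^sup>2"
proof -
  have "sqnd d (sphere_proj d Rt x) = (\<Sum>i<d. Rt\<^sup>2 / sqnd d x * (x i * x i))"
    unfolding sqnd_def dotd_def sphere_proj_def
    using sqnd_nonneg[of d x] by (intro sum.cong refl) (simp add: power2_eq_square flip: sqnd_def dotd_def)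
  also have "\<dots> = Rt\<^sup>2 / sqnd d x * sqnd d x"
    by (simp add: sum_distrib_left sqnd_def dotd_def)
  finally show ?thesis
    using assms by simp
qed

lemma abs_sphere_proj_le:
  assumes "i < d"
  shows "\<bar>sphere_proj d Rt x i\<bar> \<le> \<bar>Rt\<bar>"
proof (cases "sqnd d x = 0")
  case False
  then have pos: "sqrt (sqnd d x) > 0"
    using sqnd_nonneg[of d x] by auto
  have "(x i)\<^sup>2 \<le> sqnd d x"
    unfolding sqnd_def dotd_def power2_eq_square using assms by (intro member_le_sum) auto
  then have "\<bar>x i\<bar> \<le> sqrt (sqnd d x)"
    using real_le_rsqrt by fastforce
  then have "\<bar>Rt\<bar> * \<bar>x i\<bar> \<le> \<bar>Rt\<bar> * sqrt (sqnd d x)"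
    by (intro mult_left_mono) auto
  then show ?thesis
    using assms pos by (simp add: sphere_proj_def abs_mult divide_le_eq)
qed (use assms in \<open>auto simp: sphere_proj_def\<close>)

lemma emeasure_unit_ball_d_pos:
  assumes "d \<ge> 1"
  shows "emeasure (lborel_d d) (unit_ball_d d) \<noteq> 0"
proof -
  define a where "a = 1 / real d"
  have "PiE {..<d} (\<lambda>_. {-a<..<a}) \<subseteq> unit_ball_d d"
  proof
    fix x assume x: "x \<in> PiE {..<d} (\<lambda>_. {-a<..<a})"
    have "sqnd d x < (\<Sum>i<d. a * a)"
      unfolding sqnd_def dotd_def
    proof (rule sum_strict_mono)
      fix i assume "i \<in> {..<d}"
      then have "\<bar>x i\<bar> < a"
        using x by (force simp: PiE_iff abs_less_iff)
      then show "x i * x i < a * a"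
        by (metis abs_mult_self_eq abs_mult_less)
    qed (use assms in \<open>auto simp: lessThan_empty_iff\<close>)
    also have "\<dots> \<le> 1"
      using assms by (simp add: a_def field_simps)
    finally show "x \<in> unit_ball_d d"
      using x unfolding unit_ball_d_def by (auto simp: space_PiM PiE_iff)
  qed
  then have "emeasure (lborel_d d) (PiE {..<d} (\<lambda>_. {-a<..<a})) \<le> emeasure (lborel_d d) (unit_ball_d d)"
    by (rule emeasure_mono) (rule unit_ball_d_sets)
  moreover have "emeasure (lborel_d d) (PiE {..<d} (\<lambda>_. {-a<..<a})) = ennreal (2 * a) ^ d"
    using assms by (subst lborel_product.emeasure_PiM) (auto simp: a_def)
  moreover have "ennreal (2 * a) ^ d > 0"
    using assms by (simp add: a_def ennreal_power)
  ultimately show ?thesis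
    by auto
qed

lemma emeasure_unit_ball_d_finite: "emeasure (lborel_d d) (unit_ball_d d) \<noteq> \<infinity>"
proof -
  have box: "PiE {..<d} (\<lambda>_. {-1..1::real}) \<in> sets (lborel_d d)"
    by (rule sets_PiM_I_finite) auto
  have "unit_ball_d d \<subseteq> PiE {..<d} (\<lambda>_. {-1..1::real})"
  proof
    fix x assume "x \<in> unit_ball_d d"
    then have x: "x \<in> space (lborel_d d)" "sqnd d x < 1"
      unfolding unit_ball_d_def by auto
    have "\<bar>x i\<bar> \<le> 1" if "i < d" for i
    proof -
      have "(x i)\<^sup>2 \<le> sqnd d x"
        unfolding sqnd_def dotd_def power2_eq_square using that by (intro member_le_sum) auto
      then show ?thesis
        using x(2) abs_square_le_1[of "x i"] by simp
    qed
    then show "x \<in> PiE {..<d} (\<lambda>_. {-1..1::real})"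
      using x(1) by (auto simp: space_PiM PiE_iff abs_le_iff)
  qed
  then have "emeasure (lborel_d d) (unit_ball_d d) \<le> emeasure (lborel_d d) (PiE {..<d} (\<lambda>_. {-1..1::real}))"
    by (rule emeasure_mono) (rule box)
  also have "\<dots> = ennreal 2 ^ d"
    by (subst lborel_product.emeasure_PiM) auto
  finally show ?thesis
    using power_less_top_ennreal[of 2 d] by (auto simp: top_unique)
qed

lemma prob_space_unif_ball: "d \<ge> 1 \<Longrightarrow> prob_space (unif_ball d)"
  using emeasure_unit_ball_d_pos emeasure_unit_ball_d_finite by (intro prob_space_uniform_measure)

lemma prob_space_unif_sphere: "d \<ge> 1 \<Longrightarrow> prob_space (unif_sphere d Rt)"
  unfolding unif_sphere_eq_distr
  by (intro prob_space.prob_space_distr prob_space_unif_ball)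
    (simp_all add: measurable_uniform_measure_iff sphere_proj_measurable)

text \<open>The origin is the only point that sphere_proj does not send to the sphere.\<close>
lemma AE_unif_ball_sqnd_nonzero: "d \<ge> 1 \<Longrightarrow> AE x in unif_ball d. sqnd d x \<noteq> 0"
proof (intro AE_uniform_measureI unit_ball_d_sets AE_I')
  assume "d \<ge> 1"
  let ?origin = "PiE {..<d} (\<lambda>_. {0::real})"
  have "?origin \<in> sets (lborel_d d)"
    by (rule sets_PiM_I_finite) auto
  moreover have "emeasure (lborel_d d) ?origin = 0"
    using \<open>d \<ge> 1\<close> by (subst lborel_product.emeasure_PiM) auto
  ultimately show "?origin \<in> null_sets (lborel_d d)"
    by auto
  show "{x \<in> space (lborel_d d). \<not> (x \<in> unit_ball_d d \<longrightarrow> sqnd d x \<noteq> 0)} \<subseteq> ?origin"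
    by (auto simp: space_PiM PiE_iff extensional_def sqnd_def dotd_def sum_nonneg_eq_0_iff)
qed

definition signed_perm :: "nat \<Rightarrow> (nat \<Rightarrow> real) \<Rightarrow> (nat \<Rightarrow> nat) \<Rightarrow> (nat \<Rightarrow> real) \<Rightarrow> (nat \<Rightarrow> real)" where
  "signed_perm d s t x = restrict (\<lambda>i. s i * x (t i)) {..<d}"

definition signed_involution :: "nat \<Rightarrow> (nat \<Rightarrow> real) \<Rightarrow> (nat \<Rightarrow> nat) \<Rightarrow> bool" where
  "signed_involution d s t \<longleftrightarrow> (\<forall>i<d. t i < d \<and> t (t i) = i) \<and> (\<forall>i. s i \<in> {-1, 1})"

lemma signed_perm_measurable:
  assumes "signed_involution d s t"
  shows "signed_perm d s t \<in> lborel_d d \<rightarrow>\<^sub>M lborel_d d"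
  unfolding signed_perm_def
  by (rule measurable_restrict) (use assms in \<open>auto simp: signed_involution_def\<close>)

lemma sqnd_signed_perm:
  assumes "signed_involution d s t"
  shows "sqnd d (signed_perm d s t x) = sqnd d x"
proof -
  have "s i * s i = 1" for i
    using assms unfolding signed_involution_def by (metis insert_iff mult_1 mult_minus1 singletonD verit_minus_simplify(4))
  then have "sqnd d (signed_perm d s t x) = (\<Sum>i<d. x (t i) * x (t i))"
    unfolding sqnd_def dotd_def signed_perm_def by (intro sum.cong refl) (simp add: algebra_simps)
  also have "\<dots> = sqnd d x"
    unfolding sqnd_def dotd_def
    by (rule sum.reindex_bij_witness[where i = t and j = t]) (use assms in \<open>auto simp: signed_involution_def\<close>)
  finally show ?thesis .
qed

lemma distr_lborel_sign: "c \<in> {-1, 1} \<Longrightarrow> distr lborel borel ((*) c) = (lborel :: real measure)"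
  using lborel_distr_mult[of c] by (auto simp: density_1)

lemma distr_lborel_d_signed_perm:
  assumes st: "signed_involution d s t"
  shows "distr (lborel_d d) (lborel_d d) (signed_perm d s t) = lborel_d d"
proof (rule lborel_product.PiM_eqI)
  fix A :: "nat \<Rightarrow> real set" assume A: "\<And>i. i \<in> {..<d} \<Longrightarrow> A i \<in> sets lborel"
  have t: "\<And>i. i < d \<Longrightarrow> t i < d \<and> t (t i) = i" and s: "\<And>i. s i \<in> {-1, 1}"
    using st unfolding signed_involution_def by auto
  define A' where "A' j = (*) (s (t j)) -` A (t j)" for j
  have "signed_perm d s t -` PiE {..<d} A \<inter> space (lborel_d d) = PiE {..<d} A'"
  proof (intro set_eqI iffI)
    fix x assume x: "x \<in> signed_perm d s t -` PiE {..<d} A \<inter> space (lborel_d d)"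
    have "x j \<in> A' j" if "j < d" for j
      using x t[OF that] by (force simp: signed_perm_def A'_def PiE_iff)
    then show "x \<in> PiE {..<d} A'"
      using x by (auto simp: space_PiM PiE_iff)
  next
    fix x assume x: "x \<in> PiE {..<d} A'"
    have "signed_perm d s t x i \<in> A i" if "i < d" for i
      using x t[OF that] that by (force simp: signed_perm_def A'_def PiE_iff)
    then show "x \<in> signed_perm d s t -` PiE {..<d} A \<inter> space (lborel_d d)"
      using x by (auto simp: space_PiM PiE_iff signed_perm_def)
  qed
  then have "emeasure (distr (lborel_d d) (lborel_d d) (signed_perm d s t)) (PiE {..<d} A)
      = emeasure (lborel_d d) (PiE {..<d} A')"
    using A st by (subst emeasure_distr) (auto intro: signed_perm_measurable)
  also have "\<dots> = (\<Prod>j<d. emeasure (distr lborel borel ((*) (s (t j)))) (A (t j)))"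
    using A t by (subst lborel_product.emeasure_PiM)
      (auto simp: A'_def emeasure_distr intro!: prod.cong measurable_sets_borel[OF borel_measurable_times])
  also have "\<dots> = (\<Prod>j<d. emeasure lborel (A (t j)))"
    using s by (simp add: distr_lborel_sign)
  also have "\<dots> = (\<Prod>i<d. emeasure lborel (A i))"
    by (rule prod.reindex_bij_witness[where i = t and j = t]) (use t in auto)
  finally show "emeasure (distr (lborel_d d) (lborel_d d) (signed_perm d s t)) (PiE {..<d} A)
      = (\<Prod>i<d. emeasure lborel (A i))" .
qed auto

lemma distr_unif_ball_signed_perm:
  assumes st: "signed_involution d s t"
  shows "distr (unif_ball d) (lborel_d d) (signed_perm d s t) = unif_ball d"
proof (rule measure_eqI)
  fix A assume "A \<in> sets (distr (unif_ball d) (lborel_d d) (signed_perm d s t))"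
  then have A: "A \<in> sets (lborel_d d)"
    by simp
  note T = signed_perm_measurable[OF st]
  have ball: "unit_ball_d d \<inter> (signed_perm d s t -` A \<inter> space (lborel_d d))
      = signed_perm d s t -` (unit_ball_d d \<inter> A) \<inter> space (lborel_d d)"
    using measurable_space[OF T] sqnd_signed_perm[OF st] unfolding unit_ball_d_def by auto
  have "emeasure (distr (unif_ball d) (lborel_d d) (signed_perm d s t)) A
      = emeasure (unif_ball d) (signed_perm d s t -` A \<inter> space (lborel_d d))"
    using T A by (subst emeasure_distr) (auto simp: measurable_uniform_measure_iff)
  also have "\<dots> = emeasure (lborel_d d) (signed_perm d s t -` (unit_ball_d d \<inter> A) \<inter> space (lborel_d d))
        / emeasure (lborel_d d) (unit_ball_d d)"
    using T A unit_ball_d_sets by (simp add: measurable_sets ball)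
  also have "\<dots> = emeasure (distr (lborel_d d) (lborel_d d) (signed_perm d s t)) (unit_ball_d d \<inter> A)
        / emeasure (lborel_d d) (unit_ball_d d)"
    using T A unit_ball_d_sets by (subst emeasure_distr) auto
  also have "\<dots> = emeasure (unif_ball d) A"
    using A unit_ball_d_sets by (simp add: distr_lborel_d_signed_perm[OF st])
  finally show "emeasure (distr (unif_ball d) (lborel_d d) (signed_perm d s t)) A = emeasure (unif_ball d) A" .
qed simp

lemma distr_unif_sphere_signed_perm:
  assumes st: "signed_involution d s t"
  shows "distr (unif_sphere d Rt) (lborel_d d) (signed_perm d s t) = unif_sphere d Rt"
proof -
  note T = signed_perm_measurable[OF st]
  have commute: "signed_perm d s t (sphere_proj d Rt x) = sphere_proj d Rt (signed_perm d s t x)" for x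
    using st sqnd_signed_perm[OF st, of x]
    unfolding signed_involution_def signed_perm_def sphere_proj_def by (auto simp: fun_eq_iff)
  note F = sphere_proj_measurable[of d Rt, folded measurable_uniform_measure_iff[of "lborel_d d" "unit_ball_d d"]]
  have "distr (unif_sphere d Rt) (lborel_d d) (signed_perm d s t)
      = distr (unif_ball d) (lborel_d d) (signed_perm d s t \<circ> sphere_proj d Rt)"
    unfolding unif_sphere_eq_distr using T F by (subst distr_distr) auto
  also have "\<dots> = distr (unif_ball d) (lborel_d d) (sphere_proj d Rt \<circ> signed_perm d s t)"
    by (simp add: comp_def commute)
  also have "\<dots> = distr (distr (unif_ball d) (lborel_d d) (signed_perm d s t)) (lborel_d d) (sphere_proj d Rt)"
    using T sphere_proj_measurable by (subst distr_distr) (auto simp: measurable_uniform_measure_iff)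
  finally show ?thesis
    by (simp add: distr_unif_ball_signed_perm[OF st] unif_sphere_eq_distr)
qed

lemma integral_unif_sphere_signed_perm:
  fixes g :: "(nat \<Rightarrow> real) \<Rightarrow> real"
  assumes "signed_involution d s t" "g \<in> borel_measurable (lborel_d d)"
  shows "integral\<^sup>L (unif_sphere d Rt) g = integral\<^sup>L (unif_sphere d Rt) (\<lambda>m. g (signed_perm d s t m))"
  using integral_distr[of "signed_perm d s t" "unif_sphere d Rt" "lborel_d d" g] assms
  by (simp add: distr_unif_sphere_signed_perm measurable_unif_sphere_iff signed_perm_measurable)

lemma integrable_unif_sphere_coord_mult:
  assumes "d \<ge> 1" "a < d" "b < d"
  shows "integrable (unif_sphere d Rt) (\<lambda>m. m a * m b)"
proof -
  interpret prob_space "unif_sphere d Rt"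
    using assms(1) by (rule prob_space_unif_sphere)
  have F: "sphere_proj d Rt \<in> unif_ball d \<rightarrow>\<^sub>M lborel_d d"
    by (simp add: measurable_uniform_measure_iff sphere_proj_measurable)
  have "\<bar>sphere_proj d Rt x a * sphere_proj d Rt x b\<bar> \<le> \<bar>Rt\<bar> * \<bar>Rt\<bar>" for x
    unfolding abs_mult using abs_sphere_proj_le assms by (intro mult_mono) auto
  then have "AE m in unif_sphere d Rt. norm (m a * m b) \<le> Rt\<^sup>2"
    unfolding unif_sphere_eq_distr using coord_mult_measurable[OF assms(2,3)]
    by (subst AE_distr_iff[OF F]) (auto simp: power2_eq_square)
  then show ?thesis
    using coord_mult_measurable[OF assms(2,3)]
    by (intro integrable_const_bound[where B = "Rt\<^sup>2"]) (auto simp: measurable_unif_sphere_iff)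
qed

text \<open>Flipping the sign of coordinate a kills the mixed moment.\<close>
lemma unif_sphere_moment_offdiag:
  assumes "a < d" "b < d" "a \<noteq> b"
  shows "integral\<^sup>L (unif_sphere d Rt) (\<lambda>m. m a * m b) = 0"
proof -
  let ?s = "\<lambda>i. if i = a then -1 else 1 :: real"
  have "integral\<^sup>L (unif_sphere d Rt) (\<lambda>m. m a * m b)
      = integral\<^sup>L (unif_sphere d Rt) (\<lambda>m. signed_perm d ?s id m a * signed_perm d ?s id m b)"
    using assms by (intro integral_unif_sphere_signed_perm coord_mult_measurable) (auto simp: signed_involution_def)
  also have "\<dots> = - integral\<^sup>L (unif_sphere d Rt) (\<lambda>m. m a * m b)"
    using assms by (simp add: signed_perm_def)
  finally show ?thesis
    by simp
qed

lemma unif_sphere_moment_swap: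
  assumes "a < d" "b < d"
  shows "integral\<^sup>L (unif_sphere d Rt) (\<lambda>m. m a * m a) = integral\<^sup>L (unif_sphere d Rt) (\<lambda>m. m b * m b)"
proof -
  let ?t = "\<lambda>i. if i = a then b else if i = b then a else i"
  have "integral\<^sup>L (unif_sphere d Rt) (\<lambda>m. m a * m a)
      = integral\<^sup>L (unif_sphere d Rt) (\<lambda>m. signed_perm d (\<lambda>_. 1) ?t m a * signed_perm d (\<lambda>_. 1) ?t m a)"
    using assms by (intro integral_unif_sphere_signed_perm coord_mult_measurable)
      (auto simp: signed_involution_def)
  also have "\<dots> = integral\<^sup>L (unif_sphere d Rt) (\<lambda>m. m b * m b)"
    using assms by (simp add: signed_perm_def)
  finally show ?thesis .
qed

lemma sum_unif_sphere_moment_diag: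
  assumes "d \<ge> 1"
  shows "(\<Sum>i<d. integral\<^sup>L (unif_sphere d Rt) (\<lambda>m. m i * m i)) = Rt\<^sup>2"
proof -
  interpret prob_space "unif_sphere d Rt"
    using assms by (rule prob_space_unif_sphere)
  have F: "sphere_proj d Rt \<in> unif_ball d \<rightarrow>\<^sub>M lborel_d d"
    by (simp add: measurable_uniform_measure_iff sphere_proj_measurable)
  have "AE x in unif_ball d. sqnd d (sphere_proj d Rt x) = Rt\<^sup>2"
    using AE_unif_ball_sqnd_nonzero[OF assms] by eventually_elim (rule sqnd_sphere_proj)
  then have "AE m in unif_sphere d Rt. sqnd d m = Rt\<^sup>2"
    unfolding unif_sphere_eq_distr by (subst AE_distr_iff[OF F]) auto
  then have "integral\<^sup>L (unif_sphere d Rt) (\<lambda>m. sqnd d m) = integral\<^sup>L (unif_sphere d Rt) (\<lambda>_. Rt\<^sup>2)"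
    by (intro integral_cong_AE) (auto simp: measurable_unif_sphere_iff)
  moreover have "integral\<^sup>L (unif_sphere d Rt) (\<lambda>m. sqnd d m) = (\<Sum>i<d. integral\<^sup>L (unif_sphere d Rt) (\<lambda>m. m i * m i))"
    unfolding sqnd_def dotd_def
    using integrable_unif_sphere_coord_mult[OF assms] by (intro Bochner_Integration.integral_sum) auto
  ultimately show ?thesis
    by (simp add: prob_space)
qed

lemma unif_sphere_moment_diag:
  assumes "d \<ge> 1" "a < d"
  shows "integral\<^sup>L (unif_sphere d Rt) (\<lambda>m. m a * m a) = Rt\<^sup>2 / real d"
proof -
  have "Rt\<^sup>2 = (\<Sum>i<d. integral\<^sup>L (unif_sphere d Rt) (\<lambda>m. m a * m a))"
    using unif_sphere_moment_swap[OF _ assms(2)] by (simp flip: sum_unif_sphere_moment_diag[OF assms(1)])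
  then show ?thesis
    using assms(1) by (simp add: field_simps)
qed

theorem integral_unif_sphere_quadratic_form:
  assumes "d \<ge> 1"
  shows "integral\<^sup>L (unif_sphere d Rt) (\<lambda>m. dotd d m (mvd d W m)) = Rt\<^sup>2 / real d * trd d W"
proof -
  have int: "integrable (unif_sphere d Rt) (\<lambda>m. W i j * (m i * m j))" if "i < d" "j < d" for i j
    using integrable_unif_sphere_coord_mult[OF assms that] by simp
  have moment: "integral\<^sup>L (unif_sphere d Rt) (\<lambda>m. m i * m j) = (if i = j then Rt\<^sup>2 / real d else 0)"
    if "i < d" "j < d" for i j
    using that unif_sphere_moment_diag[OF assms] unif_sphere_moment_offdiag by auto
  have "integral\<^sup>L (unif_sphere d Rt) (\<lambda>m. dotd d m (mvd d W m))
      = integral\<^sup>L (unif_sphere d Rt) (\<lambda>m. \<Sum>i<d. \<Sum>j<d. W i j * (m i * m j))"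
    unfolding dotd_def mvd_def by (simp add: sum_distrib_left mult_ac)
  also have "\<dots> = (\<Sum>i<d. integral\<^sup>L (unif_sphere d Rt) (\<lambda>m. \<Sum>j<d. W i j * (m i * m j)))"
    using int by (intro Bochner_Integration.integral_sum integrable_sum) auto
  also have "\<dots> = (\<Sum>i<d. \<Sum>j<d. W i j * integral\<^sup>L (unif_sphere d Rt) (\<lambda>m. m i * m j))"
    using int by (intro sum.cong refl, subst Bochner_Integration.integral_sum) auto
  also have "\<dots> = (\<Sum>i<d. W i i * (Rt\<^sup>2 / real d))"
    using moment by (simp add: if_distrib[of "(*) _"] cong: if_cong)
  finally show ?thesis
    by (simp add: trd_def sum_distrib_left sum_divide_distrib mult_ac)
qed

section \<open>Consequences of the good run event\<close>

lemma ln_bounds: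
  assumes "B \<ge> 1" "0 < \<delta>" "\<delta> < 1"
  shows "0 < ln (2 * real B / \<delta>)" "ln (2 * real B / \<delta>) \<le> ln (2 * (real B)\<^sup>2 / \<delta>)"
    "1/2 \<le> ln (2 * (real B)\<^sup>2 / \<delta>)"
proof -
  have "2 \<le> 2 * real B / \<delta>"
    using assms by (simp add: le_divide_eq)
  then have "ln 2 \<le> ln (2 * real B / \<delta>)"
    by simp
  moreover have "2 * real B / \<delta> \<le> 2 * (real B)\<^sup>2 / \<delta>"
    using assms by (intro divide_right_mono) (auto simp: power2_eq_square)
  then show "ln (2 * real B / \<delta>) \<le> ln (2 * (real B)\<^sup>2 / \<delta>)"
    using \<open>2 \<le> 2 * real B / \<delta>\<close> by simp
  moreover have "2/3 \<le> ln (2 :: real)"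
    by (rule ln2_ge_two_thirds)
  ultimately show "0 < ln (2 * real B / \<delta>)" "1/2 \<le> ln (2 * (real B)\<^sup>2 / \<delta>)"
    by linarith+
qed

lemma sym_pd_diag_pos:
  assumes "sym_pd d L" "i < d"
  shows "L i i > 0"
proof -
  let ?e = "\<lambda>k. if k = i then 1 else 0 :: real"
  have "mvd d L ?e k = L k i" for k
    using assms(2) unfolding mvd_def by (simp add: mult.commute[of "L k _"] if_distrib[of "(*) _"] cong: if_cong)
  then have "dotd d ?e (mvd d L ?e) = (\<Sum>k<d. if k = i then L k i else 0)"
    unfolding dotd_def by (intro sum.cong refl) simp
  also have "\<dots> = L i i"
    using assms(2) by simp
  finally have "dotd d ?e (mvd d L ?e) = L i i" .
  moreover have "dotd d v (mvd d L v) > 0" if "\<exists>k<d. v k \<noteq> 0" for v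
    using assms(1) that unfolding sym_pd_def by blast
  then have "dotd d ?e (mvd d L ?e) > 0"
    using assms(2) by auto
  ultimately show ?thesis
    by simp
qed

lemma trd_mmd_self_eq_fro2:
  assumes "\<forall>i<d. \<forall>j<d. L i j = L j i"
  shows "trd d (mmd d L L) = fro2 d L"
  unfolding trd_def mmd_def fro2_def
proof (intro sum.cong refl)
  fix i j assume "i \<in> {..<d}" "j \<in> {..<d}"
  then show "L i j * L j i = (L i j)\<^sup>2"
    using assms by (simp add: power2_eq_square)
qed

lemma sym_pd_trace_nonneg:
  assumes "sym_pd d L"
  shows "0 \<le> trd d L" "0 \<le> trd d (mmd d L L)"
proof -
  show "0 \<le> trd d L"
    unfolding trd_def using sym_pd_diag_pos[OF assms] by (intro sum_nonneg) (simp add: less_imp_le)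
  have "trd d (mmd d L L) = fro2 d L"
    using assms unfolding sym_pd_def by (intro trd_mmd_self_eq_fro2) blast
  then show "0 \<le> trd d (mmd d L L)"
    by (simp add: fro2_nonneg)
qed

lemma sym_pd_trace_le_sqrt: "sym_pd d L \<Longrightarrow> trd d L \<le> sqrt (real d * trd d (mmd d L L))"
proof -
  assume L: "sym_pd d L"
  have "trd d (mmd d L L) = fro2 d L"
    using L unfolding sym_pd_def by (intro trd_mmd_self_eq_fro2) blast
  then have "(trd d L)\<^sup>2 \<le> real d * trd d (mmd d L L)"
    by (simp add: trd_sq_le_fro2)
  then show ?thesis
    using sym_pd_trace_nonneg(1)[OF L] real_le_rsqrt by blast
qed

lemma noise_bounds:
  fixes c0 C R l1 :: real
  assumes c0: "c0 > 1" and R: "R > 0" and C: "C \<ge> 10000 * c0\<^sup>2" and l1: "l1 > 0" and L: "sym_pd d L"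
    and A1: "R\<^sup>2 \<ge> max (C\<^sup>2 * sqrt (real d * trd d (mmd d L L)))
                 (C\<^sup>2 * max (max (trd d L / real d) (sqrt (trd d (mmd d L L) / real N))) (opnorm2 d L) * l1)"
  shows "sqrt (trd d L) \<le> R / 10000"
    and "sqrt (real d) * sqrt (trd d (mmd d L L)) \<le> R\<^sup>2 / 100000000"
    and "max (trd d L) (c0 * opnorm2 d L * l1) \<le> R\<^sup>2 / 100000000"
proof -
  have "c0 \<le> c0\<^sup>2"
    using c0 by (simp add: power2_eq_square)
  then have "10000 * c0 \<le> C" "10000 \<le> C"
    using c0 C by linarith+
  then have "100000000 * c0 \<le> C\<^sup>2"
    using c0 mult_mono[of 10000 C "10000 * c0" C] by (simp add: power2_eq_square)
  with c0 have "100000000 \<le> C\<^sup>2" "c0 / C\<^sup>2 \<le> 1 / 100000000"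
    by (simp_all add: divide_le_eq)
  then have C2: "100000000 \<le> C\<^sup>2" "c0 * (R\<^sup>2 / C\<^sup>2) \<le> R\<^sup>2 / 100000000"
    using mult_left_mono[of "c0 / C\<^sup>2" "1 / 100000000" "R\<^sup>2"] by (simp_all add: mult.commute)
  have RC: "R\<^sup>2 / C\<^sup>2 \<le> R\<^sup>2 / 100000000"
    using C2(1) by (intro divide_left_mono) auto
  have sqrt_le: "sqrt (real d * trd d (mmd d L L)) \<le> R\<^sup>2 / C\<^sup>2"
    using A1 C2(1) \<open>10000 \<le> C\<close> by (simp add: le_divide_eq mult.commute)
  then show "sqrt (real d) * sqrt (trd d (mmd d L L)) \<le> R\<^sup>2 / 100000000"
    using order_trans[OF sqrt_le RC] by (simp add: real_sqrt_mult)
  have trL: "trd d L \<le> R\<^sup>2 / 100000000"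
    using sym_pd_trace_le_sqrt[OF L] sqrt_le RC by linarith
  then have "sqrt (trd d L) \<le> sqrt ((R / 10000)\<^sup>2)"
    by (simp add: power_divide)
  then show "sqrt (trd d L) \<le> R / 10000"
    using R by simp
  have "opnorm2 d L * l1 \<le> max (max (trd d L / real d) (sqrt (trd d (mmd d L L) / real N))) (opnorm2 d L) * l1"
    using l1 by (intro mult_right_mono) auto
  also have "\<dots> \<le> R\<^sup>2 / C\<^sup>2"
    using A1 C2(1) \<open>10000 \<le> C\<close> by (simp add: le_divide_eq mult.commute mult.left_commute)
  finally have "c0 * (opnorm2 d L * l1) \<le> c0 * (R\<^sup>2 / C\<^sup>2)"
    using c0 by (intro mult_left_mono) auto
  then have "c0 * opnorm2 d L * l1 \<le> R\<^sup>2 / 100000000"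
    using C2(2) unfolding mult.assoc by (rule order_trans)
  then show "max (trd d L) (c0 * opnorm2 d L * l1) \<le> R\<^sup>2 / 100000000"
    using trL by simp
qed

lemma dimension_bounds:
  fixes c0 C l2 :: real
  assumes c0: "c0 > 1" and C: "C \<ge> 10000 * c0\<^sup>2" and l2: "l2 \<ge> 1/2" and d: "real d \<ge> C * l2 ^ 4"
  shows "d \<ge> 1" "c0 * l2 / sqrt (real d) \<le> 1/50"
proof -
  have "c0\<^sup>2 \<ge> 1"
    using c0 by (simp add: one_le_power)
  then have "C > 0"
    using C by linarith
  then have "C * l2 ^ 4 > 0"
    using l2 by simp
  then show "d \<ge> 1"
    using d by linarith
  have "(100 * c0)\<^sup>2 \<le> C"
    using C by (simp add: power_mult_distrib)
  then have "100 * c0 * l2\<^sup>2 \<le> sqrt C * l2\<^sup>2"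
    by (intro mult_right_mono real_le_rsqrt) auto
  also have "\<dots> = sqrt (C * l2 ^ 4)"
    using real_sqrt_abs[of "l2\<^sup>2"] by (simp add: real_sqrt_mult)
  also have "\<dots> \<le> sqrt (real d)"
    using d by simp
  finally have "100 * c0 * l2\<^sup>2 \<le> sqrt (real d)" .
  moreover have "50 * c0 * l2 \<le> 100 * c0 * l2\<^sup>2"
    using l2 c0 by (simp add: power2_eq_square)
  moreover have "sqrt (real d) > 0"
    using \<open>d \<ge> 1\<close> by simp
  ultimately show "c0 * l2 / sqrt (real d) \<le> 1/50"
    by (simp add: divide_le_eq)
qed

lemma divide_le_self_real: "0 \<le> x \<Longrightarrow> 1 \<le> y \<Longrightarrow> x / y \<le> (x :: real)"
  using divide_left_mono[of 1 y x] by simp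

text \<open>The error terms of the good run event, written with s = sqrt d, sN = sqrt N, a = sqrt (tr L),
  b = sqrt (tr (L L)) and M = max (tr L) (c0 |L| l1).\<close>
lemma good_run_self_terms_le:
  fixes c0 R s sN N l1 l2 a b M :: real
  assumes R: "R > 0" and s: "s > 0" and sN: "sN \<ge> 1" and N: "N \<ge> 1"
    and l: "0 < l1" "l1 \<le> l2" and c0: "c0 > 0" and e: "c0 * l2 / s \<le> 1/50"
    and a: "0 \<le> a" "a \<le> R / 10000" and b: "0 \<le> b" "s * b \<le> R\<^sup>2 / 100000000"
    and M: "0 \<le> M" "M \<le> R\<^sup>2 / 100000000"
  shows "R\<^sup>2 + c0 * R * a * l1 / (sN * s) + 4 * M / N \<le> 11/10 * R\<^sup>2"
    and "R\<^sup>2 + 2 * c0 * R * a * l1 / s + 4 * M \<le> 11/10 * R\<^sup>2"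
    and "R\<^sup>2 / 2 \<le> R\<^sup>2 - c0 * ((1 + 1 / sN) * R * a / s + b / sN) * l1"
proof -
  define \<eta> where "\<eta> = c0 * l1 / s"
  have "\<eta> \<le> c0 * l2 / s"
    unfolding \<eta>_def using l c0 s by (intro divide_right_mono mult_left_mono) auto
  moreover have "0 \<le> \<eta>"
    using l c0 s unfolding \<eta>_def by auto
  ultimately have \<eta>: "0 \<le> \<eta>" "\<eta> \<le> 1/50"
    using e by linarith+
  have Ra: "0 \<le> R * a" "R * a \<le> R\<^sup>2 / 10000"
    using a R mult_left_mono[OF a(2), of R] by (auto simp: power2_eq_square)
  have "R * a / sN \<le> R * a" "s * b / sN \<le> s * b"
    using Ra b s sN by (auto intro!: divide_le_self_real)
  then have Ra_sN: "R * a / sN \<le> R\<^sup>2 / 10000" and b_sN: "s * b / sN \<le> R\<^sup>2 / 100000000"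
    using Ra b by linarith+
  have M_N: "4 * M / N \<le> 4 * R\<^sup>2 / 100000000"
    using M N divide_le_self_real[of "4 * M" N] by simp
  have "c0 * R * a * l1 / (sN * s) = \<eta> * (R * a / sN)"
    unfolding \<eta>_def by (simp add: field_simps)
  also have "\<dots> \<le> 1/50 * (R\<^sup>2 / 10000)"
    using \<eta> Ra Ra_sN sN by (intro mult_mono) auto
  finally show "R\<^sup>2 + c0 * R * a * l1 / (sN * s) + 4 * M / N \<le> 11/10 * R\<^sup>2"
    using M_N zero_le_power2[of R] by linarith
  have "2 * c0 * R * a * l1 / s = 2 * \<eta> * (R * a)"
    unfolding \<eta>_def by (simp add: field_simps)
  also have "\<dots> \<le> 2 * (1/50) * (R\<^sup>2 / 10000)"
    using \<eta> Ra by (intro mult_mono) auto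
  finally show "R\<^sup>2 + 2 * c0 * R * a * l1 / s + 4 * M \<le> 11/10 * R\<^sup>2"
    using M(2) zero_le_power2[of R] by linarith
  have "c0 * ((1 + 1 / sN) * R * a / s + b / sN) * l1 = \<eta> * (R * a + R * a / sN + s * b / sN)"
    unfolding \<eta>_def using s sN by (simp add: field_simps)
  also have "\<dots> \<le> 1/50 * (R\<^sup>2 / 10000 + R\<^sup>2 / 10000 + R\<^sup>2 / 100000000)"
    using \<eta> Ra Ra_sN b_sN b s sN by (intro mult_mono add_mono add_nonneg_nonneg) auto
  also have "\<dots> \<le> R\<^sup>2 / 2"
    by simp
  finally show "R\<^sup>2 / 2 \<le> R\<^sup>2 - c0 * ((1 + 1 / sN) * R * a / s + b / sN) * l1"
    by linarith
qed

lemma good_run_cross_terms_le: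
  fixes c0 R s sN N l2 a b :: real
  assumes R: "R > 0" and s: "s > 0" and sN: "sN \<ge> 1" and N: "N \<ge> 1" and "c0 * l2 / s \<ge> 0"
    and a: "0 \<le> a" "a \<le> R / 10000" and b: "0 \<le> b" "s * b \<le> R\<^sup>2 / 100000000"
  shows "c0 * (R\<^sup>2 / s + R * a / (sN * s) + b / N) * l2 \<le> 11/10 * R\<^sup>2 * (c0 * l2 / s)"
    and "c0 * (R\<^sup>2 / s + R * a / s + b) * l2 \<le> 11/10 * R\<^sup>2 * (c0 * l2 / s)"
proof -
  define \<epsilon> where "\<epsilon> = c0 * l2 / s"
  have \<epsilon>: "0 \<le> \<epsilon>"
    unfolding \<epsilon>_def by fact
  have Ra: "0 \<le> R * a" "R * a \<le> R\<^sup>2 / 10000"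
    using a R mult_left_mono[OF a(2), of R] by (auto simp: power2_eq_square)
  have "R * a / sN \<le> R * a" "s * b / N \<le> s * b"
    using Ra b s sN N by (auto intro!: divide_le_self_real)
  then have Ra_sN: "R * a / sN \<le> R\<^sup>2 / 10000" and b_N: "s * b / N \<le> R\<^sup>2 / 100000000"
    using Ra b by linarith+
  have small: "\<epsilon> * (R\<^sup>2 + R\<^sup>2 / 10000 + R\<^sup>2 / 100000000) \<le> 11/10 * R\<^sup>2 * \<epsilon>"
    using \<epsilon> by (subst mult.commute, intro mult_right_mono) simp_all
  have "c0 * (R\<^sup>2 / s + R * a / (sN * s) + b / N) * l2 = \<epsilon> * (R\<^sup>2 + R * a / sN + s * b / N)"
    unfolding \<epsilon>_def using s sN N by (simp add: field_simps)
  also have "\<dots> \<le> \<epsilon> * (R\<^sup>2 + R\<^sup>2 / 10000 + R\<^sup>2 / 100000000)"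
    using \<epsilon> Ra_sN b_N by (intro mult_left_mono add_mono) auto
  also note small
  finally show "c0 * (R\<^sup>2 / s + R * a / (sN * s) + b / N) * l2 \<le> 11/10 * R\<^sup>2 * (c0 * l2 / s)"
    unfolding \<epsilon>_def .
  have "c0 * (R\<^sup>2 / s + R * a / s + b) * l2 = \<epsilon> * (R\<^sup>2 + R * a + s * b)"
    unfolding \<epsilon>_def using s by (simp add: field_simps)
  also have "\<dots> \<le> \<epsilon> * (R\<^sup>2 + R\<^sup>2 / 10000 + R\<^sup>2 / 100000000)"
    using \<epsilon> Ra b by (intro mult_left_mono add_mono) auto
  also note small
  finally show "c0 * (R\<^sup>2 / s + R * a / s + b) * l2 \<le> 11/10 * R\<^sup>2 * (c0 * l2 / s)"
    unfolding \<epsilon>_def .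
qed

lemma min_div_le_of_sample_size:
  fixes cB k :: real and d B :: nat
  assumes k: "k \<ge> 1/4" and d: "d \<ge> 1" and B: "real B \<ge> cB * real d" and cB: "cB > 0"
  shows "min cB 1 / (16 * k) \<le> real B / (121/50 * (real d + real B * k))"
proof -
  define m where "m = min cB 1"
  have "cB * real d > 0"
    using cB d by simp
  then have "real B > 0"
    using B by linarith
  have "m * real d \<le> cB * real d"
    unfolding m_def by (intro mult_right_mono) auto
  moreover have "1 * real B \<le> 4 * k * real B"
    using k by (intro mult_right_mono) auto
  ultimately have "m * real d \<le> 4 * k * real B"
    using B by linarith
  moreover have "m * (real B * k) \<le> 1 * (real B * k)"
    using k \<open>real B > 0\<close> by (intro mult_right_mono) (auto simp: m_def)
  ultimately have "m * (real d + real B * k) \<le> 5 * k * real B"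
    by (simp add: algebra_simps)
  moreover have "0 \<le> k * real B"
    using k \<open>real B > 0\<close> by simp
  ultimately have "121/50 * (m * (real d + real B * k)) \<le> 16 * (k * real B)"
    by (simp add: mult.assoc)
  then show ?thesis
    unfolding m_def[symmetric] using k d \<open>real B > 0\<close> by (simp add: divide_simps mult_ac add_pos_nonneg)
qed

lemma trace_lower_bound_arith:
  fixes R c0 l2 \<epsilon> cB Rt :: real and d B :: nat
  assumes R: "R > 0" and c0: "c0 > 1" and l2: "l2 \<ge> 1/2" and d: "d \<ge> 1" and B: "real B \<ge> cB * real d"
    and cB: "cB > 0" and \<epsilon>: "real d * \<epsilon>\<^sup>2 = (c0 * l2)\<^sup>2"
  shows "min cB 1 * Rt\<^sup>2 / (16 * c0\<^sup>2 * R\<^sup>2 * l2\<^sup>2)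
    \<le> Rt\<^sup>2 / real d * (R\<^sup>2 / 2 * (real B)\<^sup>2 / (real B * (11/10 * R\<^sup>2)\<^sup>2 + (real B)\<^sup>2 * (11/10 * R\<^sup>2 * \<epsilon>)\<^sup>2))"
proof -
  define k where "k = (c0 * l2)\<^sup>2"
  define z where "z = 1 + real B * \<epsilon>\<^sup>2"
  have "1/2 \<le> c0 * l2"
    using c0 l2 mult_mono[of 1 c0 "1/2" l2] by simp
  then have "(1/2)\<^sup>2 \<le> k"
    unfolding k_def by (rule power_mono) simp
  then have k: "k \<ge> 1/4"
    by (simp add: power2_eq_square)
  have dz: "real d + real B * k = real d * z"
    unfolding k_def z_def using \<epsilon> by (simp add: algebra_simps)
  have "cB * real d > 0"
    using cB d by simp
  then have "real B > 0"
    using B by linarith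
  then have "z > 0"
    unfolding z_def by (simp add: add_pos_nonneg)
  have "min cB 1 * Rt\<^sup>2 / (16 * c0\<^sup>2 * R\<^sup>2 * l2\<^sup>2) = Rt\<^sup>2 / R\<^sup>2 * (min cB 1 / (16 * k))"
    unfolding k_def by (simp add: power_mult_distrib field_simps)
  also have "\<dots> \<le> Rt\<^sup>2 / R\<^sup>2 * (real B / (121/50 * (real d * z)))"
    using min_div_le_of_sample_size[OF k d B cB] unfolding dz by (rule mult_left_mono) simp
  also have "\<dots> = Rt\<^sup>2 / real d * (R\<^sup>2 / 2 * (real B)\<^sup>2 / (121/100 * R\<^sup>2 * R\<^sup>2 * real B * z))"
    using R d \<open>real B > 0\<close> \<open>z > 0\<close> by (simp add: field_simps power2_eq_square)
  also have "121/100 * R\<^sup>2 * R\<^sup>2 * real B * z = real B * (11/10 * R\<^sup>2)\<^sup>2 + (real B)\<^sup>2 * (11/10 * R\<^sup>2 * \<epsilon>)\<^sup>2"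
    unfolding z_def by (simp add: power2_eq_square algebra_simps)
  finally show ?thesis .
qed

locale good_run_setting =
  fixes c0 C R \<delta> :: real and d B N :: nat and L mh xq :: "nat \<Rightarrow> nat \<Rightarrow> real" and yq :: "nat \<Rightarrow> real"
  assumes c0: "c0 > 1" and C: "C \<ge> 10000 * c0\<^sup>2" and B: "B \<ge> 1" and N: "N \<ge> 1" and R: "R > 0"
    and \<delta>: "0 < \<delta>" "\<delta> < 1" and L: "sym_pd d L" and y: "\<forall>\<tau><B. yq \<tau> \<in> {-1, 1}"
    and good: "good_run c0 d B N R \<delta> L mh xq yq"
    and A1: "R\<^sup>2 \<ge> max (C\<^sup>2 * sqrt (real d * trd d (mmd d L L)))
                 (C\<^sup>2 * max (max (trd d L / real d) (sqrt (trd d (mmd d L L) / real N))) (opnorm2 d L) * ln (2 * real B / \<delta>))"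
    and A3: "real d \<ge> C * (ln (2 * (real B)\<^sup>2 / \<delta>)) ^ 4"
begin

definition incoherence :: real where
  "incoherence = c0 * ln (2 * (real B)\<^sup>2 / \<delta>) / sqrt (real d)"

lemma
  shows dim_ge_1: "d \<ge> 1"
    and margin_ge: "\<forall>\<tau><B. R\<^sup>2 / 2 \<le> dotd d (mh \<tau>) (\<lambda>k. yq \<tau> * xq \<tau> k)"
    and sqnd_le: "\<forall>\<tau><B. sqnd d (mh \<tau>) \<le> 11/10 * R\<^sup>2 \<and> sqnd d (xq \<tau>) \<le> 11/10 * R\<^sup>2"
    and cross_le: "\<forall>\<tau><B. \<forall>q<B. q \<noteq> \<tau> \<longrightarrow>
           \<bar>dotd d (mh q) (mh \<tau>)\<bar> \<le> 11/10 * R\<^sup>2 * incoherence \<and> \<bar>dotd d (xq \<tau>) (xq q)\<bar> \<le> 11/10 * R\<^sup>2 * incoherence"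
proof -
  define l1 where "l1 = ln (2 * real B / \<delta>)"
  define l2 where "l2 = ln (2 * (real B)\<^sup>2 / \<delta>)"
  note l = ln_bounds[OF B \<delta>, folded l1_def l2_def]
  note dim = dimension_bounds[OF c0 C l(3) A3[folded l2_def]]
  note noise = noise_bounds[OF c0 R C l(1) L A1[folded l1_def]]
  show "d \<ge> 1"
    by (rule dim(1))
  have pos: "sqrt (real d) > 0" "sqrt (real N) \<ge> 1" "real N \<ge> 1" "c0 > 0"
    using dim(1) N c0 by auto
  note tr = real_sqrt_ge_zero[OF sym_pd_trace_nonneg(1)[OF L]] real_sqrt_ge_zero[OF sym_pd_trace_nonneg(2)[OF L]]
  have "0 \<le> max (trd d L) (c0 * opnorm2 d L * l1)"
    using sym_pd_trace_nonneg(1)[OF L] by simp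
  note self = good_run_self_terms_le[OF R pos(1,2,3) l(1,2) pos(4) dim(2) tr(1) noise(1) tr(2) noise(2) this noise(3)]
  note cross = good_run_cross_terms_le[OF R pos(1,2,3) _ tr(1) noise(1) tr(2) noise(2), of c0 l2]
  have sqrt_Nd: "sqrt (real N * real d) = sqrt (real N) * sqrt (real d)"
    by (rule real_sqrt_mult)
  note good_at = good[unfolded good_run_def Let_def, folded l1_def l2_def, unfolded sqrt_Nd, rule_format]
  show "\<forall>\<tau><B. R\<^sup>2 / 2 \<le> dotd d (mh \<tau>) (\<lambda>k. yq \<tau> * xq \<tau> k)"
  proof (intro allI impI)
    fix \<tau> assume "\<tau> < B"
    then have "\<bar>dotd d (mh \<tau>) (\<lambda>k. yq \<tau> * xq \<tau> k) - R\<^sup>2\<bar>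
        \<le> c0 * ((1 + 1 / sqrt (real N)) * R * sqrt (trd d L) / sqrt (real d) + sqrt (trd d (mmd d L L)) / sqrt (real N)) * l1"
      using good_at by blast
    then show "R\<^sup>2 / 2 \<le> dotd d (mh \<tau>) (\<lambda>k. yq \<tau> * xq \<tau> k)"
      using self(3) unfolding abs_le_iff by linarith
  qed
  show "\<forall>\<tau><B. sqnd d (mh \<tau>) \<le> 11/10 * R\<^sup>2 \<and> sqnd d (xq \<tau>) \<le> 11/10 * R\<^sup>2"
  proof (intro allI impI conjI)
    fix \<tau> assume "\<tau> < B"
    then have "\<bar>sqnd d (mh \<tau>) - R\<^sup>2\<bar>
        \<le> c0 * R * sqrt (trd d L) * l1 / (sqrt (real N) * sqrt (real d)) + 4 * max (trd d L) (c0 * opnorm2 d L * l1) / real N"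
      "\<bar>sqnd d (xq \<tau>) - R\<^sup>2\<bar> \<le> 2 * c0 * R * sqrt (trd d L) * l1 / sqrt (real d) + 4 * max (trd d L) (c0 * opnorm2 d L * l1)"
      using good_at by blast+
    then show "sqnd d (mh \<tau>) \<le> 11/10 * R\<^sup>2" "sqnd d (xq \<tau>) \<le> 11/10 * R\<^sup>2"
      using self(1,2) unfolding abs_le_iff by linarith+
  qed
  have "c0 * l2 / sqrt (real d) \<ge> 0"
    using pos l by simp
  then show "\<forall>\<tau><B. \<forall>q<B. q \<noteq> \<tau> \<longrightarrow>
      \<bar>dotd d (mh q) (mh \<tau>)\<bar> \<le> 11/10 * R\<^sup>2 * incoherence \<and> \<bar>dotd d (xq \<tau>) (xq q)\<bar> \<le> 11/10 * R\<^sup>2 * incoherence"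
    using good_at cross unfolding incoherence_def l2_def[symmetric] by (meson order_trans)
qed

lemma max_margin_exists_unique: "\<exists>!W. is_max_margin d B mh xq yq W"
  using max_margin_exists[OF scaled_id_dmat mm_feasible_scaled_id[OF R margin_ge]] max_margin_unique
  by blast

lemma max_margin_quadratic_form_bounds:
  assumes cB: "cB > 0" and A2: "real B \<ge> cB * real d" and W: "is_max_margin d B mh xq yq W"
  shows "min cB 1 * Rt\<^sup>2 / (16 * c0\<^sup>2 * R\<^sup>2 * (ln (2 * (real B)\<^sup>2 / \<delta>))\<^sup>2)
      \<le> integral\<^sup>L (unif_sphere d Rt) (\<lambda>m. dotd d m (mvd d W m))"
    and "integral\<^sup>L (unif_sphere d Rt) (\<lambda>m. dotd d m (mvd d W m)) \<le> 6 * Rt\<^sup>2 / R\<^sup>2"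
proof -
  have "real d * incoherence\<^sup>2 = (c0 * ln (2 * (real B)\<^sup>2 / \<delta>))\<^sup>2"
    unfolding incoherence_def using dim_ge_1 by (simp add: power_divide)
  note arith = trace_lower_bound_arith[OF R c0 ln_bounds(3)[OF B \<delta>] dim_ge_1 A2 cB this, of Rt]
  have "R\<^sup>2 / 2 * (real B)\<^sup>2 / (real B * (11/10 * R\<^sup>2)\<^sup>2 + (real B)\<^sup>2 * (11/10 * R\<^sup>2 * incoherence)\<^sup>2) \<le> trd d W"
    by (rule max_margin_trace_lower[OF R margin_ge y sqnd_le cross_le W])
  then have "Rt\<^sup>2 / real d * (R\<^sup>2 / 2 * (real B)\<^sup>2 / (real B * (11/10 * R\<^sup>2)\<^sup>2 + (real B)\<^sup>2 * (11/10 * R\<^sup>2 * incoherence)\<^sup>2))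
      \<le> Rt\<^sup>2 / real d * trd d W"
    by (rule mult_left_mono) simp
  with arith show "min cB 1 * Rt\<^sup>2 / (16 * c0\<^sup>2 * R\<^sup>2 * (ln (2 * (real B)\<^sup>2 / \<delta>))\<^sup>2)
      \<le> integral\<^sup>L (unif_sphere d Rt) (\<lambda>m. dotd d m (mvd d W m))"
    unfolding integral_unif_sphere_quadratic_form[OF dim_ge_1] by (rule order_trans)
  have "Rt\<^sup>2 / real d * trd d W \<le> Rt\<^sup>2 / real d * (2 * real d / R\<^sup>2)"
    using max_margin_trace_bounds(2)[OF R margin_ge W] by (intro mult_left_mono) auto
  also have "\<dots> \<le> 6 * Rt\<^sup>2 / R\<^sup>2"
    using dim_ge_1 R by (simp add: divide_right_mono)
  finally show "integral\<^sup>L (unif_sphere d Rt) (\<lambda>m. dotd d m (mvd d W m)) \<le> 6 * Rt\<^sup>2 / R\<^sup>2"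
    unfolding integral_unif_sphere_quadratic_form[OF dim_ge_1] .
qed

end

text \<open>Any C \<ge> 10000 c0^2 works.\<close>
theorem mainTheorem8:
  fixes c0 :: real
  assumes "c0 > 1"
  shows "\<exists>C0>1. \<forall>C\<ge>C0. \<forall>cB>0.
    \<forall>(d::nat) (B::nat) (N::nat) (R::real) (\<delta>::real) (Rt::real) (L::nat \<Rightarrow> nat \<Rightarrow> real)
      (mu::nat \<Rightarrow> nat \<Rightarrow> real) (y::nat \<Rightarrow> nat \<Rightarrow> real) (z::nat \<Rightarrow> nat \<Rightarrow> nat \<Rightarrow> real).
    let x = (\<lambda>\<tau> i k. y \<tau> i * mu \<tau> k + z \<tau> i k);
        muhat = (\<lambda>\<tau> k. (\<Sum>i<N. y \<tau> i * x \<tau> i k) / real N);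
        xq = (\<lambda>\<tau>. x \<tau> N);
        yq = (\<lambda>\<tau>. y \<tau> N);
        trL = trd d L; trL2 = trd d (mmd d L L); nL = opnorm2 d L
    in
    (B \<ge> 1 \<and> N \<ge> 1 \<and> R > 0 \<and> 0 < \<delta> \<and> \<delta> < 1 \<and> Rt > 0 \<and> sym_pd d L
     \<and> (\<forall>\<tau><B. sqnd d (mu \<tau>) = R\<^sup>2)
     \<and> (\<forall>\<tau><B. \<forall>i\<le>N. y \<tau> i \<in> {-1, 1})
     \<and> good_run c0 d B N R \<delta> L muhat xq yq
     \<and> R\<^sup>2 \<ge> max (C\<^sup>2 * sqrt (real d * trL2))
                 (C\<^sup>2 * max (max (trL / real d) (sqrt (trL2 / real N))) nL * ln (2 * real B / \<delta>))
     \<and> real B \<ge> cB * real d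
     \<and> real d \<ge> C * (ln (2 * (real B)\<^sup>2 / \<delta>)) ^ 4)
    \<longrightarrow> (\<exists>!W. is_max_margin d B muhat xq yq W)
      \<and> (\<forall>W. is_max_margin d B muhat xq yq W \<longrightarrow>
           min cB 1 * Rt\<^sup>2 / (16 * c0\<^sup>2 * R\<^sup>2 * (ln (2 * (real B)\<^sup>2 / \<delta>))\<^sup>2)
             \<le> integral\<^sup>L (unif_sphere d Rt) (\<lambda>m. dotd d m (mvd d W m))
         \<and> integral\<^sup>L (unif_sphere d Rt) (\<lambda>m. dotd d m (mvd d W m)) \<le> 6 * Rt\<^sup>2 / R\<^sup>2)"
  unfolding Let_def
proof (rule exI[of _ "10000 * c0\<^sup>2"], rule conjI)
  show "1 < 10000 * c0\<^sup>2"
    using one_less_power[OF assms, of 2] by simp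
qed (intro allI impI conjI; elim conjE;
    rule good_run_setting.max_margin_exists_unique good_run_setting.max_margin_quadratic_form_bounds;
    (rule good_run_setting.intro)?; auto simp: assms)

end
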